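(* For $\mathbf{R}=(\mathbf{R}_t)_{t=1}^T\in\mathrm{SO}(3)^T$ and $\mathbf{s}=(\mathbf{s}_t)_{t=1}^T\in(\mathbb{R}^3)^T$ define $$\mathbf{c}^\star(\mathbf{R},\mathbf{s}) \triangleq 2\mathbf{G}\Big(\mathbf{B}^\mathsf{T}\sum_{t=1}^T \mathbf{W}_t \begin{bmatrix}\mathbf{R}_t^\mathsf{T}\mathbf{y}_t^1-\mathbf{s}_t\\ \vdots\\ \mathbf{R}_t^\mathsf{T}\mathbf{y}_t^N-\mathbf{s}_t\end{bmatrix} + \lambda\bar{\mathbf{c}}\Big)+\mathbf{g},$$ which is affine in the entries of $(\mathbf{R},\mathbf{s})$. Let (Q) be the problem: minimize over $\mathbf{R}_t\in\mathrm{SO}(3)$, $\mathbf{s}_t\in\mathbb{R}^3$ ($t=1,\dots,T$), $\boldsymbol{\Omega}_t\in\mathrm{SO}(3)$, $\mathbf{v}_t\in\mathbb{R}^3$ ($t=1,\dots,T-1$) the objective $$\sum_{t=1}^T\sum_{i=1}^N w_t^i\|\mathbf{R}_t^\mathsf{T}\mathbf{y}_t^i-\mathbf{B}_i\mathbf{c}^\star-\mathbf{s}_t\|^2+\lambda\|\mathbf{c}^\star-\bar{\mathbf{c}}\|^2+\sum_{t=1}^{T-2}\big(\omega_t\|\mathbf{v}_{t+1}-\mathbf{v}_t\|^2+\kappa_t\|\boldsymbol{\Omega}_{t+1}-\boldsymbol{\Omega}_t\|_F^2\big),$$ with $\mathbf{c}^\star=\mathbf{c}^\star(\mathbf{R},\mathbf{s})$,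 subject to $\boldsymbol{\Omega}_t\mathbf{s}_{t+1}=\mathbf{s}_t+\mathbf{v}_t$ and $\mathbf{R}_{t+1}=\mathbf{R}_t\boldsymbol{\Omega}_t$ for $t=1,\dots,T-1$. Then: (i) (P) and (Q) have the same optimal value, and $(\mathbf{R}_t,\mathbf{p}_t,\mathbf{v}_t,\boldsymbol{\Omega}_t,\mathbf{c})$ is optimal for (P) if and only if $(\mathbf{R}_t,\mathbf{s}_t,\mathbf{v}_t,\boldsymbol{\Omega}_t)$ with $\mathbf{s}_t=\mathbf{R}_t^\mathsf{T}\mathbf{p}_t$ is optimal for (Q) and $\mathbf{c}=\mathbf{c}^\star(\mathbf{R},\mathbf{s})$; (ii) (Q) is a quadratically constrained quadratic program: its objective is a polynomial of degree at most $2$ in the entries of $(\mathbf{R}_t,\mathbf{s}_t,\mathbf{v}_t,\boldsymbol{\Omega}_t)$, and all its constraints (including membership in $\mathrm{SO}(3)$) can be written as polynomial equations of degree at most $2$ in these entries.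
   Context: Data: integers $T\ge 2$, $N\ge1$, $K\ge1$; matrices $\mathbf{B}_i\in\mathbb{R}^{3\times K}$ ($i=1,\dots,N$); measurements $\mathbf{y}_t^i\in\mathbb{R}^3$; weights $w_t^i>0$, $\omega_t\ge0$, $\kappa_t\ge0$, $\lambda>0$; $\bar{\mathbf{c}}\triangleq\frac1K\mathbf{1}_K$. Notation: $\mathbf{W}_t \triangleq \mathrm{blkdiag}(w_t^1\mathbf{I}_3,\dots,w_t^N\mathbf{I}_3)$, $\mathbf{B}\triangleq[\mathbf{B}_1^\mathsf{T},\dots,\mathbf{B}_N^\mathsf{T}]^\mathsf{T}\in\mathbb{R}^{3N\times K}$, $\mathbf{H}\triangleq \tfrac12(\mathbf{B}^\mathsf{T}(\sum_t\mathbf{W}_t)\mathbf{B}+\lambda\mathbf{I}_K)^{-1}$, $\mathbf{G}\triangleq \mathbf{H}-\frac{\mathbf{H}\mathbf{1}_K\mathbf{1}_K^\mathsf{T}\mathbf{H}}{\mathbf{1}_K^\mathsf{T}\mathbf{H}\mathbf{1}_K}$, $\mathbf{g}\triangleq\frac{\mathbf{H}\mathbf{1}_K}{\mathbf{1}_K^\mathsf{T}\mathbf{H}\mathbf{1}_K}$. Problem (P): minimize over $\mathbf{R}_t\in\mathrm{SO}(3)$, $\mathbf{p}_t\in\mathbb{R}^3$ ($t=1,\dots,T$), $\boldsymbol{\Omega}_t\in\mathrm{SO}(3)$, $\mathbf{v}_t\in\mathbb{R}^3$ ($t=1,\dots,T-1$), $\mathbf{c}\in\mathbb{R}^K$ with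 $\mathbf{1}_K^\mathsf{T}\mathbf{c}=1$ the objective $$\sum_{t=1}^T\sum_{i=1}^N w_t^i\|\mathbf{y}_t^i-\mathbf{R}_t\mathbf{B}_i\mathbf{c}-\mathbf{p}_t\|^2+\lambda\|\mathbf{c}-\bar{\mathbf{c}}\|^2+\sum_{t=1}^{T-2}\big(\omega_t\|\mathbf{v}_{t+1}-\mathbf{v}_t\|^2+\kappa_t\|\boldsymbol{\Omega}_{t+1}-\boldsymbol{\Omega}_t\|_F^2\big)$$ subject to $\mathbf{p}_{t+1}=\mathbf{p}_t+\mathbf{R}_t\mathbf{v}_t$, $\mathbf{R}_{t+1}=\mathbf{R}_t\boldsymbol{\Omega}_t$ for $t=1,\dots,T-1$. *)

theory Defs
  imports "HOL-Analysis.Analysis"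
begin

definition SO3 :: "(real^3^3) set" where
  "SO3 = {Q. rotation_matrix Q}"

definition ones :: "real^'k" where
  "ones = (\<chi> i. 1)"

definition cbar :: "real^'k::finite" where
  "cbar = (\<chi> i. 1 / real CARD('k))"

definition outer :: "real^'m \<Rightarrow> real^'n \<Rightarrow> real^'n^'m" where
  "outer u v = (\<chi> i j. u $ i * v $ j)"

text \<open>H = 1/2 (B^T (sum_t W_t) B + lambda I)^{-1}, with B^T W_t B = sum_i w_t^i B_i^T B_i.\<close>
definition Hmat :: "nat \<Rightarrow> nat \<Rightarrow> (nat \<Rightarrow> real^'k^3) \<Rightarrow> (nat \<Rightarrow> nat \<Rightarrow> real) \<Rightarrow> real \<Rightarrow> real^'k^'k::finite" where
  "Hmat T N B w lam = (1/2) *\<^sub>R matrix_inv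
     ((\<Sum>t\<in>{1..T}. \<Sum>i\<in>{1..N}. w t i *\<^sub>R (transpose (B i) ** B i)) + lam *\<^sub>R mat 1)"

definition Gmat :: "nat \<Rightarrow> nat \<Rightarrow> (nat \<Rightarrow> real^'k^3) \<Rightarrow> (nat \<Rightarrow> nat \<Rightarrow> real) \<Rightarrow> real \<Rightarrow> real^'k^'k::finite" where
  "Gmat T N B w lam = (let H = Hmat T N B w lam in
     H - (1 / (ones \<bullet> (H *v ones))) *\<^sub>R outer (H *v ones) (transpose H *v ones))"

definition gvec :: "nat \<Rightarrow> nat \<Rightarrow> (nat \<Rightarrow> real^'k^3) \<Rightarrow> (nat \<Rightarrow> nat \<Rightarrow> real) \<Rightarrow> real \<Rightarrow> real^'k::finite" where
  "gvec T N B w lam = (let H = Hmat T N B w lam in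
     (1 / (ones \<bullet> (H *v ones))) *\<^sub>R (H *v ones))"

definition cstar :: "nat \<Rightarrow> nat \<Rightarrow> (nat \<Rightarrow> real^'k^3) \<Rightarrow> (nat \<Rightarrow> nat \<Rightarrow> real^3)
    \<Rightarrow> (nat \<Rightarrow> nat \<Rightarrow> real) \<Rightarrow> real \<Rightarrow> (nat \<Rightarrow> real^3^3) \<Rightarrow> (nat \<Rightarrow> real^3) \<Rightarrow> real^'k::finite" where
  "cstar T N B y w lam R s =
     2 *\<^sub>R (Gmat T N B w lam *v
        ((\<Sum>t\<in>{1..T}. \<Sum>i\<in>{1..N}. w t i *\<^sub>R (transpose (B i) *v (transpose (R t) *v y t i - s t)))
         + lam *\<^sub>R cbar))
     + gvec T N B w lam"

text \<open>Smoothness regularizer; norm on real^3^3 is the Frobenius norm.\<close>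
definition reg :: "nat \<Rightarrow> (nat \<Rightarrow> real) \<Rightarrow> (nat \<Rightarrow> real) \<Rightarrow> (nat \<Rightarrow> real^3) \<Rightarrow> (nat \<Rightarrow> real^3^3) \<Rightarrow> real" where
  "reg T om ka v Om = (\<Sum>t\<in>{1..T-2}. om t * (norm (v (Suc t) - v t))\<^sup>2
                                     + ka t * (norm (Om (Suc t) - Om t))\<^sup>2)"

definition objP :: "nat \<Rightarrow> nat \<Rightarrow> (nat \<Rightarrow> real^'k^3) \<Rightarrow> (nat \<Rightarrow> nat \<Rightarrow> real^3)
    \<Rightarrow> (nat \<Rightarrow> nat \<Rightarrow> real) \<Rightarrow> (nat \<Rightarrow> real) \<Rightarrow> (nat \<Rightarrow> real) \<Rightarrow> real
    \<Rightarrow> (nat \<Rightarrow> real^3^3) \<Rightarrow> (nat \<Rightarrow> real^3) \<Rightarrow> (nat \<Rightarrow> real^3) \<Rightarrow> (nat \<Rightarrow> real^3^3) \<Rightarrow> real^'k::finite \<Rightarrow> real" where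
  "objP T N B y w om ka lam R p v Om c =
     (\<Sum>t\<in>{1..T}. \<Sum>i\<in>{1..N}. w t i * (norm (y t i - R t *v (B i *v c) - p t))\<^sup>2)
     + lam * (norm (c - cbar))\<^sup>2 + reg T om ka v Om"

definition feasP :: "nat \<Rightarrow> (nat \<Rightarrow> real^3^3) \<Rightarrow> (nat \<Rightarrow> real^3) \<Rightarrow> (nat \<Rightarrow> real^3)
    \<Rightarrow> (nat \<Rightarrow> real^3^3) \<Rightarrow> real^'k::finite \<Rightarrow> bool" where
  "feasP T R p v Om c \<longleftrightarrow>
     (\<forall>t\<in>{1..T}. R t \<in> SO3) \<and> (\<forall>t\<in>{1..T-1}. Om t \<in> SO3) \<and> (\<Sum>k\<in>UNIV. c $ k) = 1 \<and>
     (\<forall>t\<in>{1..T-1}. p (Suc t) = p t + R t *v v t \<and> R (Suc t) = R t ** Om t)"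

definition valP :: "nat \<Rightarrow> nat \<Rightarrow> (nat \<Rightarrow> real^'k^3) \<Rightarrow> (nat \<Rightarrow> nat \<Rightarrow> real^3)
    \<Rightarrow> (nat \<Rightarrow> nat \<Rightarrow> real) \<Rightarrow> (nat \<Rightarrow> real) \<Rightarrow> (nat \<Rightarrow> real) \<Rightarrow> real \<Rightarrow> real" where
  "valP T N B y w om ka lam =
     Inf {objP T N B y w om ka lam R p v Om c | R p v Om c. feasP T R p v Om c}"

definition optP :: "nat \<Rightarrow> nat \<Rightarrow> (nat \<Rightarrow> real^'k^3) \<Rightarrow> (nat \<Rightarrow> nat \<Rightarrow> real^3)
    \<Rightarrow> (nat \<Rightarrow> nat \<Rightarrow> real) \<Rightarrow> (nat \<Rightarrow> real) \<Rightarrow> (nat \<Rightarrow> real) \<Rightarrow> real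
    \<Rightarrow> (nat \<Rightarrow> real^3^3) \<Rightarrow> (nat \<Rightarrow> real^3) \<Rightarrow> (nat \<Rightarrow> real^3) \<Rightarrow> (nat \<Rightarrow> real^3^3) \<Rightarrow> real^'k::finite \<Rightarrow> bool" where
  "optP T N B y w om ka lam R p v Om c \<longleftrightarrow> feasP T R p v Om c \<and>
     (\<forall>R' p' v' Om' c'. feasP T R' p' v' Om' c' \<longrightarrow>
        objP T N B y w om ka lam R p v Om c \<le> objP T N B y w om ka lam R' p' v' Om' c')"

definition objQ :: "nat \<Rightarrow> nat \<Rightarrow> (nat \<Rightarrow> real^'k::finite^3) \<Rightarrow> (nat \<Rightarrow> nat \<Rightarrow> real^3)
    \<Rightarrow> (nat \<Rightarrow> nat \<Rightarrow> real) \<Rightarrow> (nat \<Rightarrow> real) \<Rightarrow> (nat \<Rightarrow> real) \<Rightarrow> real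
    \<Rightarrow> (nat \<Rightarrow> real^3^3) \<Rightarrow> (nat \<Rightarrow> real^3) \<Rightarrow> (nat \<Rightarrow> real^3) \<Rightarrow> (nat \<Rightarrow> real^3^3) \<Rightarrow> real" where
  "objQ T N B y w om ka lam R s v Om =
     (let c = (cstar T N B y w lam R s :: real^'k) in
       (\<Sum>t\<in>{1..T}. \<Sum>i\<in>{1..N}. w t i * (norm (transpose (R t) *v y t i - B i *v c - s t))\<^sup>2)
       + lam * (norm (c - cbar))\<^sup>2 + reg T om ka v Om)"

definition feasQ :: "nat \<Rightarrow> (nat \<Rightarrow> real^3^3) \<Rightarrow> (nat \<Rightarrow> real^3) \<Rightarrow> (nat \<Rightarrow> real^3)
    \<Rightarrow> (nat \<Rightarrow> real^3^3) \<Rightarrow> bool" where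
  "feasQ T R s v Om \<longleftrightarrow>
     (\<forall>t\<in>{1..T}. R t \<in> SO3) \<and> (\<forall>t\<in>{1..T-1}. Om t \<in> SO3) \<and>
     (\<forall>t\<in>{1..T-1}. Om t *v s (Suc t) = s t + v t \<and> R (Suc t) = R t ** Om t)"

definition valQ :: "nat \<Rightarrow> nat \<Rightarrow> (nat \<Rightarrow> real^'k::finite^3) \<Rightarrow> (nat \<Rightarrow> nat \<Rightarrow> real^3)
    \<Rightarrow> (nat \<Rightarrow> nat \<Rightarrow> real) \<Rightarrow> (nat \<Rightarrow> real) \<Rightarrow> (nat \<Rightarrow> real) \<Rightarrow> real \<Rightarrow> real" where
  "valQ T N B y w om ka lam =
     Inf {objQ T N B y w om ka lam R s v Om | R s v Om. feasQ T R s v Om}"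

definition optQ :: "nat \<Rightarrow> nat \<Rightarrow> (nat \<Rightarrow> real^'k::finite^3) \<Rightarrow> (nat \<Rightarrow> nat \<Rightarrow> real^3)
    \<Rightarrow> (nat \<Rightarrow> nat \<Rightarrow> real) \<Rightarrow> (nat \<Rightarrow> real) \<Rightarrow> (nat \<Rightarrow> real) \<Rightarrow> real
    \<Rightarrow> (nat \<Rightarrow> real^3^3) \<Rightarrow> (nat \<Rightarrow> real^3) \<Rightarrow> (nat \<Rightarrow> real^3) \<Rightarrow> (nat \<Rightarrow> real^3^3) \<Rightarrow> bool" where
  "optQ T N B y w om ka lam R s v Om \<longleftrightarrow> feasQ T R s v Om \<and>
     (\<forall>R' s' v' Om'. feasQ T R' s' v' Om' \<longrightarrow>
        objQ T N B y w om ka lam R s v Om \<le> objQ T N B y w om ka lam R' s' v' Om')"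

datatype qvar = VR nat 3 3 | VS nat 3 | VV nat 3 | VOm nat 3 3

definition qvars :: "nat \<Rightarrow> qvar set" where
  "qvars T = {VR t i j | t i j. t \<in> {1..T}} \<union> {VS t i | t i. t \<in> {1..T}}
           \<union> {VV t i | t i. t \<in> {1..T-1}} \<union> {VOm t i j | t i j. t \<in> {1..T-1}}"

definition entries :: "(nat \<Rightarrow> real^3^3) \<Rightarrow> (nat \<Rightarrow> real^3) \<Rightarrow> (nat \<Rightarrow> real^3) \<Rightarrow> (nat \<Rightarrow> real^3^3)
    \<Rightarrow> qvar \<Rightarrow> real" where
  "entries R s v Om x = (case x of VR t i j \<Rightarrow> R t $ i $ j | VS t i \<Rightarrow> s t $ i
                         | VV t i \<Rightarrow> v t $ i | VOm t i j \<Rightarrow> Om t $ i $ j)"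

definition deg2_poly :: "qvar set \<Rightarrow> ((qvar \<Rightarrow> real) \<Rightarrow> real) \<Rightarrow> bool" where
  "deg2_poly I q \<longleftrightarrow> (\<exists>a0 a b. \<forall>z. q z = a0 + (\<Sum>j\<in>I. a j * z j) + (\<Sum>j\<in>I. \<Sum>k\<in>I. b j k * z j * z k))"

end

theory Submission
  imports Defs
begin

text \<open>For fixed rotations and positions the objective of (P) is a quadratic in c whose Hessian
  dominates 2 lambda I, so on the hyperplane sum c = 1 it is minimised exactly at the Lagrange point
  c*, and it exceeds its minimum by at least lambda |c - c*|^2. Rotating each residual of (P) by
  R_t^T and substituting s_t = R_t^T p_t turns (P) with c eliminated into (Q), and the motion
  constraints correspond under the same substitution; this gives (i). For (ii), c* is affine in the
  entries of R and s, so every term of the objective of (Q) is a weighted square of an affine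
  function, while R in SO(3) is equivalent to the quadratic equations R^T R = I and R = cof R.\<close>


declare transpose_matrix_vector[simp del]

lemma inner_matrix_vector_transpose: "(A *v x) \<bullet> (y::real^_) = x \<bullet> (transpose A *v y)"
  by (metis dot_lmul_matrix vector_transpose_matrix)

lemma matrix_vector_mult_sum_left: "(\<Sum>i\<in>A. f i) *v (x::real^_) = (\<Sum>i\<in>A. f i *v x)"
  by (induction A rule: infinite_finite_induct) (auto simp: matrix_vector_mult_add_rdistrib)

lemma norm_orthogonal_matrix_vector:
  assumes "orthogonal_matrix Q" shows "norm (Q *v (x::real^'n)) = norm x"
  using assms orthogonal_transformation_norm orthogonal_transformation_matrix
    matrix_vector_mul_linear matrix_of_matrix_vector_mul by metis

lemma orthogonal_matrix_transpose_mult_vec: "orthogonal_matrix Q \<Longrightarrow> transpose Q *v (Q *v x) = x"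
  by (simp add: matrix_vector_mul_assoc orthogonal_matrix_def)

lemma orthogonal_matrix_mult_transpose_vec: "orthogonal_matrix Q \<Longrightarrow> Q *v (transpose Q *v x) = x"
  by (simp add: matrix_vector_mul_assoc orthogonal_matrix_def)

lemma SO3_orthogonal_matrix: "X \<in> SO3 \<Longrightarrow> orthogonal_matrix X"
  by (simp add: SO3_def rotation_matrix_def)

lemma norm_diff_mult_add_sq:
  fixes B :: "real^'n^'m"
  shows "(norm (a - B *v (c + d)))\<^sup>2 =
    (norm (a - B *v c))\<^sup>2 - 2 * (d \<bullet> (transpose B *v (a - B *v c))) + d \<bullet> (transpose B *v (B *v d))"
proof -
  have sq: "(norm (u - v))\<^sup>2 = (norm u)\<^sup>2 - 2 * (v \<bullet> u) + v \<bullet> v" for u v :: "real^'m"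
    by (simp add: power2_norm_eq_inner inner_diff_left inner_diff_right inner_commute)
  have split: "a - B *v (c + d) = (a - B *v c) - B *v d" by (simp add: matrix_vector_right_distrib)
  show ?thesis
    unfolding split using sq[of "a - B *v c" "B *v d"] inner_matrix_vector_transpose[of B d "a - B *v c"]
      inner_matrix_vector_transpose[of B d "B *v d"] by simp
qed

lemma sum_ones_inner: "ones \<bullet> (c::real^'k::finite) = (\<Sum>k\<in>UNIV. c $ k)"
  by (simp add: ones_def inner_vec_def)

lemma ones_neq_zero: "(ones::real^'k::finite) \<noteq> 0"
  by (simp add: ones_def vec_eq_iff)

lemma outer_mult_vec: "outer u v *v x = (v \<bullet> x) *\<^sub>R (u::real^_)"
  by (simp add: outer_def matrix_vector_mult_def vec_eq_iff inner_vec_def sum_distrib_left algebra_simps)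

section \<open>The regularised weighted least-squares problem in the shape coefficients\<close>

definition normal_matrix :: "nat \<Rightarrow> nat \<Rightarrow> (nat \<Rightarrow> real^'k^3) \<Rightarrow> (nat \<Rightarrow> nat \<Rightarrow> real) \<Rightarrow> real
    \<Rightarrow> real^'k^'k::finite" where
  "normal_matrix T N B w lam = (\<Sum>t\<in>{1..T}. \<Sum>i\<in>{1..N}. w t i *\<^sub>R (transpose (B i) ** B i)) + lam *\<^sub>R mat 1"

definition fit_cost :: "nat \<Rightarrow> nat \<Rightarrow> (nat \<Rightarrow> real^'k^3) \<Rightarrow> (nat \<Rightarrow> nat \<Rightarrow> real) \<Rightarrow> real
    \<Rightarrow> (nat \<Rightarrow> nat \<Rightarrow> real^3) \<Rightarrow> real^'k::finite \<Rightarrow> real" where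
  "fit_cost T N B w lam a c =
     (\<Sum>t\<in>{1..T}. \<Sum>i\<in>{1..N}. w t i * (norm (a t i - B i *v c))\<^sup>2) + lam * (norm (c - cbar))\<^sup>2"

definition fit_rhs :: "nat \<Rightarrow> nat \<Rightarrow> (nat \<Rightarrow> real^'k^3) \<Rightarrow> (nat \<Rightarrow> nat \<Rightarrow> real) \<Rightarrow> real
    \<Rightarrow> (nat \<Rightarrow> nat \<Rightarrow> real^3) \<Rightarrow> real^'k::finite" where
  "fit_rhs T N B w lam a = (\<Sum>t\<in>{1..T}. \<Sum>i\<in>{1..N}. w t i *\<^sub>R (transpose (B i) *v a t i)) + lam *\<^sub>R cbar"

definition fit_solution :: "nat \<Rightarrow> nat \<Rightarrow> (nat \<Rightarrow> real^'k^3) \<Rightarrow> (nat \<Rightarrow> nat \<Rightarrow> real) \<Rightarrow> real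
    \<Rightarrow> (nat \<Rightarrow> nat \<Rightarrow> real^3) \<Rightarrow> real^'k::finite" where
  "fit_solution T N B w lam a = 2 *\<^sub>R (Gmat T N B w lam *v fit_rhs T N B w lam a) + gvec T N B w lam"

lemma normal_matrix_mult_vec: "normal_matrix T N B w lam *v x =
   (\<Sum>t\<in>{1..T}. \<Sum>i\<in>{1..N}. w t i *\<^sub>R (transpose (B i) *v (B i *v x))) + lam *\<^sub>R x"
  by (simp add: normal_matrix_def matrix_vector_mult_add_rdistrib matrix_vector_mult_sum_left
      scaleR_matrix_vector_assoc[symmetric] matrix_vector_mul_assoc)

lemma inner_normal_matrix: "x \<bullet> (normal_matrix T N B w lam *v x) =
   (\<Sum>t\<in>{1..T}. \<Sum>i\<in>{1..N}. w t i * (norm (B i *v x))\<^sup>2) + lam * (norm x)\<^sup>2"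
  by (simp add: normal_matrix_mult_vec inner_sum_right inner_add_right power2_norm_eq_inner
      inner_matrix_vector_transpose)

lemma Hmat_eq_normal_matrix_inv: "Hmat T N B w lam = (1/2) *\<^sub>R matrix_inv (normal_matrix T N B w lam)"
  by (simp add: Hmat_def normal_matrix_def)

lemma fit_rhs_diff: "fit_rhs T N B w lam a - normal_matrix T N B w lam *v c =
  (\<Sum>t\<in>{1..T}. \<Sum>i\<in>{1..N}. w t i *\<^sub>R (transpose (B i) *v (a t i - B i *v c))) + lam *\<^sub>R (cbar - c)"
  by (simp add: fit_rhs_def normal_matrix_mult_vec matrix_vector_mult_diff_distrib scaleR_diff_right
      sum_subtractf algebra_simps)

lemma fit_cost_add: "fit_cost T N B w lam a (c + d) =
   fit_cost T N B w lam a c - 2 * (d \<bullet> (fit_rhs T N B w lam a - normal_matrix T N B w lam *v c))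
   + d \<bullet> (normal_matrix T N B w lam *v d)"
proof -
  have reg: "(norm (c + d - cbar))\<^sup>2 = (norm (c - cbar))\<^sup>2 - 2 * (d \<bullet> (cbar - c)) + d \<bullet> d"
    by (simp add: power2_norm_eq_inner inner_diff_left inner_diff_right inner_add_left
        inner_add_right inner_commute)
  have "fit_cost T N B w lam a (c + d) = fit_cost T N B w lam a c
     - 2 * ((\<Sum>t\<in>{1..T}. \<Sum>i\<in>{1..N}. w t i * (d \<bullet> (transpose (B i) *v (a t i - B i *v c))))
            + lam * (d \<bullet> (cbar - c)))
     + ((\<Sum>t\<in>{1..T}. \<Sum>i\<in>{1..N}. w t i * (d \<bullet> (transpose (B i) *v (B i *v d)))) + lam * (d \<bullet> d))"
    unfolding fit_cost_def norm_diff_mult_add_sq reg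
    by (simp add: algebra_simps sum.distrib sum_subtractf sum_distrib_left)
  also have "\<dots> = fit_cost T N B w lam a c
     - 2 * (d \<bullet> (fit_rhs T N B w lam a - normal_matrix T N B w lam *v c))
     + d \<bullet> (normal_matrix T N B w lam *v d)"
    by (simp only: fit_rhs_diff) (simp add: normal_matrix_mult_vec inner_sum_right inner_add_right)
  finally show ?thesis .
qed

locale weighted_fit =
  fixes T N :: nat and B :: "nat \<Rightarrow> real^'k::finite^3" and w :: "nat \<Rightarrow> nat \<Rightarrow> real" and lam :: real
  assumes weights_nonneg: "\<forall>t\<in>{1..T}. \<forall>i\<in>{1..N}. w t i \<ge> 0" and lam_pos: "lam > 0"
begin

abbreviation "M \<equiv> normal_matrix T N B w lam"
abbreviation "H \<equiv> Hmat T N B w lam"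

lemma inner_normal_matrix_ge: "x \<bullet> (M *v x) \<ge> lam * (norm x)\<^sup>2"
proof -
  have "(\<Sum>t\<in>{1..T}. \<Sum>i\<in>{1..N}. w t i * (norm (B i *v x))\<^sup>2) \<ge> 0"
    using weights_nonneg by (intro sum_nonneg) auto
  then show ?thesis by (simp add: inner_normal_matrix)
qed

lemma invertible_normal_matrix: "invertible M"
proof -
  have "x = 0" if "M *v x = 0" for x
  proof -
    have "lam * (norm x)\<^sup>2 \<le> 0" using inner_normal_matrix_ge[of x] that by simp
    then show ?thesis using lam_pos by (simp add: mult_le_0_iff)
  qed
  then show ?thesis by (simp add: invertible_left_inverse matrix_left_invertible_ker)
qed

lemma normal_matrix_mult_Hmat: "M *v (H *v x) = (1/2) *\<^sub>R x"
proof -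
  have "M ** matrix_inv M = mat 1"
    using invertible_normal_matrix unfolding matrix_inv_def invertible_def by (rule someI2_ex) auto
  then show ?thesis
    by (simp add: Hmat_eq_normal_matrix_inv scaleR_matrix_vector_assoc[symmetric]
        matrix_vector_mult_scaleR matrix_vector_mul_assoc)
qed

lemma ones_Hmat_ones_pos: "(ones::real^'k) \<bullet> (H *v ones) > 0"
proof -
  let ?u = "H *v ones"
  have "?u \<bullet> (M *v ?u) = ones \<bullet> ?u / 2" by (simp add: normal_matrix_mult_Hmat inner_commute)
  moreover have "?u \<bullet> (M *v ?u) \<ge> lam * (norm ?u)\<^sup>2" by (rule inner_normal_matrix_ge)
  moreover have "?u \<noteq> 0" using normal_matrix_mult_Hmat[of ones] ones_neq_zero by auto
  then have "lam * (norm ?u)\<^sup>2 > 0" using lam_pos by simp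
  ultimately show ?thesis by linarith
qed

lemma Gmat_mult_vec: "Gmat T N B w lam *v b =
   H *v b - ((transpose H *v ones) \<bullet> b / (ones \<bullet> (H *v ones))) *\<^sub>R (H *v ones)"
  by (simp add: Gmat_def Let_def matrix_vector_mult_diff_rdistrib scaleR_matrix_vector_assoc[symmetric]
      outer_mult_vec)

lemma gvec_eq: "gvec T N B w lam = (1 / (ones \<bullet> (H *v ones))) *\<^sub>R (H *v ones)"
  by (simp add: gvec_def Let_def)

text \<open>Stationarity of the Lagrangian for the constraint sum c = 1.\<close>
lemma normal_matrix_fit_solution:
  "\<exists>\<mu>. M *v fit_solution T N B w lam a = fit_rhs T N B w lam a - \<mu> *\<^sub>R ones"
proof -
  let ?\<alpha> = "ones \<bullet> (H *v ones)" and ?b = "fit_rhs T N B w lam a"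
  have "M *v fit_solution T N B w lam a = ?b - ((transpose H *v ones) \<bullet> ?b / ?\<alpha> - 1 / (2 * ?\<alpha>)) *\<^sub>R ones"
    by (simp add: fit_solution_def Gmat_mult_vec gvec_eq matrix_vector_right_distrib
        matrix_vector_mult_diff_distrib matrix_vector_mult_scaleR normal_matrix_mult_Hmat algebra_simps)
  then show ?thesis by blast
qed

lemma sum_fit_solution: "(\<Sum>k\<in>UNIV. fit_solution T N B w lam a $ k) = 1"
proof -
  have "ones \<bullet> (H *v b) = (transpose H *v ones) \<bullet> b" for b
    by (metis inner_commute inner_matrix_vector_transpose)
  then have "ones \<bullet> fit_solution T N B w lam a = 1"
    using ones_Hmat_ones_pos
    by (simp add: fit_solution_def Gmat_mult_vec gvec_eq inner_add_right inner_diff_right)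
  then show ?thesis by (simp add: sum_ones_inner)
qed

lemma fit_cost_ge_fit_solution:
  assumes "(\<Sum>k\<in>UNIV. c $ k) = 1"
  shows "fit_cost T N B w lam a c \<ge>
    fit_cost T N B w lam a (fit_solution T N B w lam a) + lam * (norm (c - fit_solution T N B w lam a))\<^sup>2"
proof -
  let ?c0 = "fit_solution T N B w lam a"
  define d where "d = c - ?c0"
  have d_ones: "d \<bullet> ones = 0"
    using assms sum_fit_solution unfolding d_def
    by (simp add: inner_diff_left inner_commute sum_ones_inner sum_subtractf)
  obtain \<mu> where "M *v ?c0 = fit_rhs T N B w lam a - \<mu> *\<^sub>R ones"
    using normal_matrix_fit_solution by blast
  then have "d \<bullet> (fit_rhs T N B w lam a - M *v ?c0) = 0" by (simp add: d_ones)
  then have "fit_cost T N B w lam a c = fit_cost T N B w lam a ?c0 + d \<bullet> (M *v d)"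
    using fit_cost_add[of T N B w lam a ?c0 d] by (simp add: d_def)
  then show ?thesis using inner_normal_matrix_ge[of d] by (simp add: d_def)
qed

end

section \<open>Reduction of (P) to (Q)\<close>

definition body_frame_obs :: "(nat \<Rightarrow> nat \<Rightarrow> real^3) \<Rightarrow> (nat \<Rightarrow> real^3^3) \<Rightarrow> (nat \<Rightarrow> real^3)
    \<Rightarrow> nat \<Rightarrow> nat \<Rightarrow> real^3" where
  "body_frame_obs y R s t i = transpose (R t) *v y t i - s t"

lemma cstar_eq_fit_solution:
  "cstar T N B y w lam R s = fit_solution T N B w lam (body_frame_obs y R s)"
  by (simp add: cstar_def fit_solution_def fit_rhs_def body_frame_obs_def)

lemma objQ_eq_fit_cost: "objQ T N B y w om ka lam R s v Om =
   fit_cost T N B w lam (body_frame_obs y R s) (cstar T N B y w lam R s) + reg T om ka v Om"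
  unfolding objQ_def fit_cost_def Let_def body_frame_obs_def by (simp add: algebra_simps)

lemma objP_eq_fit_cost:
  assumes "\<forall>t\<in>{1..T}. orthogonal_matrix (R t)" and "\<forall>t\<in>{1..T}. transpose (R t) *v p t = s t"
  shows "objP T N B y w om ka lam R p v Om c =
    fit_cost T N B w lam (body_frame_obs y R s) c + reg T om ka v Om"
proof -
  have "norm (y t i - R t *v (B i *v c) - p t) = norm (body_frame_obs y R s t i - B i *v c)"
    if t: "t \<in> {1..T}" for t i
  proof -
    have "transpose (R t) *v (y t i - R t *v (B i *v c) - p t) = body_frame_obs y R s t i - B i *v c"
      using assms t by (simp add: body_frame_obs_def matrix_vector_mult_diff_distrib
          orthogonal_matrix_transpose_mult_vec algebra_simps)
    then show ?thesis
      using norm_orthogonal_matrix_vector assms(1) t orthogonal_matrix_transpose by metis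
  qed
  then show ?thesis unfolding objP_def fit_cost_def by simp
qed

lemma feasP_imp_feasQ:
  assumes "feasP T R p v Om c"
  shows "feasQ T R (\<lambda>t. transpose (R t) *v p t) v Om"
proof -
  have "Om t *v (transpose (R (Suc t)) *v p (Suc t)) = transpose (R t) *v p t + v t"
    if "t \<in> {1..T-1}" for t
  proof -
    have R: "orthogonal_matrix (R t)" and Om: "orthogonal_matrix (Om t)"
      and step: "p (Suc t) = p t + R t *v v t" "R (Suc t) = R t ** Om t"
      using assms that unfolding feasP_def by (auto intro: SO3_orthogonal_matrix)
    have "transpose (R (Suc t)) = transpose (Om t) ** transpose (R t)"
      by (simp add: step(2) matrix_transpose_mul)
    then show ?thesis
      by (simp add: step(1) matrix_vector_mul_assoc[symmetric] orthogonal_matrix_mult_transpose_vec[OF Om]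
          matrix_vector_right_distrib orthogonal_matrix_transpose_mult_vec[OF R])
  qed
  then show ?thesis using assms unfolding feasP_def feasQ_def by auto
qed

lemma feasQ_imp_feasP:
  assumes "feasQ T R s v Om" and "\<forall>t\<in>{1..T}. transpose (R t) *v p t = s t"
    and "(\<Sum>k\<in>UNIV. c $ k) = 1"
  shows "feasP T R p v Om c"
proof -
  have "p (Suc t) = p t + R t *v v t" if "t \<in> {1..T-1}" for t
  proof -
    have R: "orthogonal_matrix (R t)" and Om: "orthogonal_matrix (Om t)"
      and step: "Om t *v s (Suc t) = s t + v t" "R (Suc t) = R t ** Om t"
      using assms that unfolding feasQ_def by (auto intro: SO3_orthogonal_matrix)
    have "transpose (R t) *v p t = s t" "transpose (R (Suc t)) *v p (Suc t) = s (Suc t)"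
      using assms(2) that by auto
    then have "s (Suc t) = transpose (Om t) *v (transpose (R t) *v p (Suc t))"
      by (simp add: step(2) matrix_transpose_mul matrix_vector_mul_assoc)
    then have "transpose (R t) *v p (Suc t) = transpose (R t) *v p t + v t"
      using step(1) \<open>transpose (R t) *v p t = s t\<close>
      by (simp add: orthogonal_matrix_mult_transpose_vec[OF Om])
    then have "R t *v (transpose (R t) *v p (Suc t)) = R t *v (transpose (R t) *v p t + v t)"
      by simp
    then show ?thesis
      by (simp add: orthogonal_matrix_mult_transpose_vec[OF R] matrix_vector_right_distrib)
  qed
  then show ?thesis using assms unfolding feasP_def feasQ_def by auto
qed

locale pose_problem = weighted_fit T N B w lam
  for T N :: nat and B :: "nat \<Rightarrow> real^'k::finite^3" and w lam +
  fixes y :: "nat \<Rightarrow> nat \<Rightarrow> real^3" and om ka :: "nat \<Rightarrow> real"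
  assumes om_nonneg: "\<forall>t\<in>{1..T-2}. om t \<ge> 0" and ka_nonneg: "\<forall>t\<in>{1..T-2}. ka t \<ge> 0"
begin

abbreviation "objP' \<equiv> objP T N B y w om ka lam"
abbreviation "objQ' \<equiv> objQ T N B y w om ka lam"
abbreviation "cstar' \<equiv> cstar T N B y w lam"

lemma sum_cstar: "(\<Sum>k\<in>UNIV. (cstar' R s :: real^'k) $ k) = 1"
  unfolding cstar_eq_fit_solution by (rule sum_fit_solution)

lemma objQ_nonneg: "objQ' R s v Om \<ge> 0"
proof -
  have "fit_cost T N B w lam a c \<ge> 0" for a c
    unfolding fit_cost_def using weights_nonneg lam_pos by (intro add_nonneg_nonneg sum_nonneg) auto
  moreover have "reg T om ka v Om \<ge> 0"
    unfolding reg_def using om_nonneg ka_nonneg by (intro sum_nonneg) auto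
  ultimately show ?thesis unfolding objQ_eq_fit_cost by simp
qed

lemma objP_ge_objQ:
  assumes "feasP T R p v Om (c::real^'k)"
  shows "objQ' R (\<lambda>t. transpose (R t) *v p t) v Om
    + lam * (norm (c - cstar' R (\<lambda>t. transpose (R t) *v p t)))\<^sup>2 \<le> objP' R p v Om c"
proof -
  have orth: "\<forall>t\<in>{1..T}. orthogonal_matrix (R t)" and sum: "(\<Sum>k\<in>UNIV. c $ k) = 1"
    using assms unfolding feasP_def by (auto intro: SO3_orthogonal_matrix)
  let ?a = "body_frame_obs y R (\<lambda>t. transpose (R t) *v p t)"
  have "objP' R p v Om c = fit_cost T N B w lam ?a c + reg T om ka v Om"
    by (rule objP_eq_fit_cost[OF orth]) simp
  then show ?thesis
    using fit_cost_ge_fit_solution[OF sum, of ?a] by (simp add: objQ_eq_fit_cost cstar_eq_fit_solution)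
qed

lemma objP_cstar_eq_objQ:
  assumes "feasQ T R s v Om" and "\<forall>t\<in>{1..T}. transpose (R t) *v p t = s t"
  shows "feasP T R p v Om (cstar' R s)" and "objP' R p v Om (cstar' R s) = objQ' R s v Om"
proof -
  show "feasP T R p v Om (cstar' R s)" using feasQ_imp_feasP[OF assms sum_cstar] .
  have "\<forall>t\<in>{1..T}. orthogonal_matrix (R t)"
    using assms unfolding feasQ_def by (auto intro: SO3_orthogonal_matrix)
  then show "objP' R p v Om (cstar' R s) = objQ' R s v Om"
    using assms(2) by (simp add: objP_eq_fit_cost objQ_eq_fit_cost)
qed

lemma feasQ_imp_feasP_witness:
  assumes "feasQ T R s v Om"
  shows "feasP T R (\<lambda>t. R t *v s t) v Om (cstar' R s)"
    and "objP' R (\<lambda>t. R t *v s t) v Om (cstar' R s) = objQ' R s v Om"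
proof -
  have "\<forall>t\<in>{1..T}. transpose (R t) *v (R t *v s t) = s t"
    using assms unfolding feasQ_def
    by (auto intro: SO3_orthogonal_matrix orthogonal_matrix_transpose_mult_vec)
  then show "feasP T R (\<lambda>t. R t *v s t) v Om (cstar' R s)"
    and "objP' R (\<lambda>t. R t *v s t) v Om (cstar' R s) = objQ' R s v Om"
    using objP_cstar_eq_objQ[OF assms] by auto
qed

lemma objQ_le_objP:
  assumes "feasP T R p v Om (c::real^'k)"
  shows "objQ' R (\<lambda>t. transpose (R t) *v p t) v Om \<le> objP' R p v Om c"
proof -
  have "0 \<le> lam * (norm (c - cstar' R (\<lambda>t. transpose (R t) *v p t)))\<^sup>2" using lam_pos by simp
  then show ?thesis using objP_ge_objQ[OF assms] by linarith
qed

lemma valP_eq_valQ: "valP T N B y w om ka lam = valQ T N B y w om ka lam"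
proof -
  define SP where "SP = {objP' R p v Om c | R p v Om (c::real^'k). feasP T R p v Om c}"
  define SQ where "SQ = {objQ' R s v Om | R s v Om. feasQ T R s v Om}"
  have SQ_below_SP: "\<exists>a\<in>SQ. a \<le> b" if "b \<in> SP" for b
    using that feasP_imp_feasQ objQ_le_objP unfolding SP_def SQ_def by blast
  have "SQ \<subseteq> SP"
  proof
    fix a assume "a \<in> SQ"
    then obtain R s v Om where a: "a = objQ' R s v Om" and f: "feasQ T R s v Om" unfolding SQ_def by blast
    show "a \<in> SP" unfolding SP_def a feasQ_imp_feasP_witness(2)[OF f, symmetric]
      using feasQ_imp_feasP_witness(1)[OF f] by blast
  qed
  have SQ_nonneg: "\<forall>a\<in>SQ. 0 \<le> a" unfolding SQ_def using objQ_nonneg by blast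
  then have SP_nonneg: "\<forall>b\<in>SP. 0 \<le> b" using SQ_below_SP by fastforce
  have "Inf SP = Inf SQ"
  proof (cases "SQ = {}")
    case True
    then have "SP = {}" using SQ_below_SP by blast
    with True show ?thesis by simp
  next
    case False
    then have "SP \<noteq> {}" using \<open>SQ \<subseteq> SP\<close> by blast
    have "Inf SP \<le> Inf SQ"
      using cInf_superset_mono[OF False _ \<open>SQ \<subseteq> SP\<close>] SP_nonneg by (auto simp: bdd_below_def)
    moreover have "Inf SQ \<le> Inf SP"
      using cInf_mono[OF \<open>SP \<noteq> {}\<close> _ SQ_below_SP] SQ_nonneg by (auto simp: bdd_below_def)
    ultimately show ?thesis by simp
  qed
  then show ?thesis unfolding valP_def valQ_def SP_def SQ_def .
qed

lemma optP_imp_optQ: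
  assumes opt: "optP T N B y w om ka lam R p v Om (c::real^'k)"
  defines "s \<equiv> \<lambda>t. transpose (R t) *v p t"
  shows "optQ T N B y w om ka lam R s v Om \<and> c = cstar' R s"
proof -
  have fP: "feasP T R p v Om c" using opt unfolding optP_def by blast
  have fQ: "feasQ T R s v Om" unfolding s_def by (rule feasP_imp_feasQ[OF fP])
  have "objP' R p v Om c \<le> objP' R p v Om (cstar' R s)"
    using opt objP_cstar_eq_objQ(1)[OF fQ, of p] unfolding optP_def s_def by simp
  also have "\<dots> = objQ' R s v Om" using objP_cstar_eq_objQ(2)[OF fQ, of p] by (simp add: s_def)
  finally have "lam * (norm (c - cstar' R s))\<^sup>2 \<le> 0" using objP_ge_objQ[OF fP] unfolding s_def by linarith
  then have c: "c = cstar' R s" using lam_pos by (simp add: mult_le_0_iff)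
  have "objQ' R s v Om \<le> objQ' R' s' v' Om'" if "feasQ T R' s' v' Om'" for R' s' v' Om'
  proof -
    note witness = feasQ_imp_feasP_witness[OF that]
    have "objQ' R s v Om \<le> objP' R p v Om c" unfolding s_def by (rule objQ_le_objP[OF fP])
    also have "\<dots> \<le> objP' R' (\<lambda>t. R' t *v s' t) v' Om' (cstar' R' s')"
      using opt witness(1) unfolding optP_def by blast
    also have "\<dots> = objQ' R' s' v' Om'" by (rule witness(2))
    finally show ?thesis .
  qed
  then show ?thesis using fQ c unfolding optQ_def by blast
qed

lemma optQ_imp_optP:
  assumes opt: "optQ T N B y w om ka lam R (\<lambda>t. transpose (R t) *v p t) v Om"
    and c: "c = cstar' R (\<lambda>t. transpose (R t) *v p t)"
  shows "optP T N B y w om ka lam R p v Om (c::real^'k)"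
proof -
  let ?s = "\<lambda>t. transpose (R t) *v p t"
  have fQ: "feasQ T R ?s v Om" using opt unfolding optQ_def by blast
  have fP: "feasP T R p v Om c" and eq: "objP' R p v Om c = objQ' R ?s v Om"
    using objP_cstar_eq_objQ[OF fQ, of p] c by auto
  have "objP' R p v Om c \<le> objP' R' p' v' Om' c'" if "feasP T R' p' v' Om' (c'::real^'k)" for R' p' v' Om' c'
  proof -
    have "objP' R p v Om c = objQ' R ?s v Om" by (rule eq)
    also have "\<dots> \<le> objQ' R' (\<lambda>t. transpose (R' t) *v p' t) v' Om'"
      using opt feasP_imp_feasQ[OF that] unfolding optQ_def by blast
    also have "\<dots> \<le> objP' R' p' v' Om' c'" by (rule objQ_le_objP[OF that])
    finally show ?thesis .
  qed
  then show ?thesis using fP unfolding optP_def by blast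
qed

lemma optP_iff_optQ:
  "optP T N B y w om ka lam R p v Om (c::real^'k) \<longleftrightarrow>
     optQ T N B y w om ka lam R (\<lambda>t. transpose (R t) *v p t) v Om
     \<and> c = cstar' R (\<lambda>t. transpose (R t) *v p t)"
  using optP_imp_optQ optQ_imp_optP by blast

end

section \<open>Polynomials of degree at most two\<close>

definition affine_poly :: "'v set \<Rightarrow> (('v \<Rightarrow> real) \<Rightarrow> real) \<Rightarrow> bool" where
  "affine_poly I q \<longleftrightarrow> (\<exists>a0 a. \<forall>z. q z = a0 + (\<Sum>j\<in>I. a j * z j))"

definition affine_vec_poly :: "'v set \<Rightarrow> (('v \<Rightarrow> real) \<Rightarrow> real^'n) \<Rightarrow> bool" where
  "affine_vec_poly I F \<longleftrightarrow> (\<forall>k. affine_poly I (\<lambda>z. F z $ k))"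

lemma affine_poly_const [intro]: "affine_poly I (\<lambda>z. c)"
  unfolding affine_poly_def by (intro exI[of _ c] exI[of _ "\<lambda>_. 0"]) simp

lemma affine_poly_var [intro]:
  assumes "finite I" and "j \<in> I" shows "affine_poly I (\<lambda>z. z j)"
proof -
  have "(\<Sum>k\<in>I. (if k = j then 1 else 0) * z k) = (\<Sum>k\<in>I. if k = j then z k else 0)" for z :: "_ \<Rightarrow> real"
    by (rule sum.cong) auto
  then have "(\<Sum>k\<in>I. (if k = j then 1 else 0) * z k) = z j" for z :: "_ \<Rightarrow> real"
    using assms by (simp add: sum.delta')
  then show ?thesis
    unfolding affine_poly_def by (intro exI[of _ 0] exI[of _ "\<lambda>k. if k = j then 1 else 0"]) simp
qed

lemma affine_poly_add [intro]:
  assumes "affine_poly I f" and "affine_poly I g" shows "affine_poly I (\<lambda>z. f z + g z)"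
proof -
  obtain a0 a b0 b where "\<forall>z. f z = a0 + (\<Sum>j\<in>I. a j * z j)" and "\<forall>z. g z = b0 + (\<Sum>j\<in>I. b j * z j)"
    using assms unfolding affine_poly_def by blast
  then show ?thesis
    unfolding affine_poly_def
    by (intro exI[of _ "a0 + b0"] exI[of _ "\<lambda>j. a j + b j"]) (simp add: distrib_right sum.distrib)
qed

lemma affine_poly_cmult [intro]:
  assumes "affine_poly I f" shows "affine_poly I (\<lambda>z. c * f z)"
proof -
  obtain a0 a where "\<forall>z. f z = a0 + (\<Sum>j\<in>I. a j * z j)"
    using assms unfolding affine_poly_def by blast
  then show ?thesis
    unfolding affine_poly_def
    by (intro exI[of _ "c * a0"] exI[of _ "\<lambda>j. c * a j"]) (simp add: algebra_simps sum_distrib_left)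
qed

lemma affine_poly_multc [intro]: "affine_poly I f \<Longrightarrow> affine_poly I (\<lambda>z. f z * c)"
  using affine_poly_cmult[of I f c] by (simp add: mult.commute)

lemma affine_poly_diff [intro]: "affine_poly I f \<Longrightarrow> affine_poly I g \<Longrightarrow> affine_poly I (\<lambda>z. f z - g z)"
  using affine_poly_add[of I f "\<lambda>z. -1 * g z"] affine_poly_cmult[of I g "-1"] by simp

lemma affine_poly_sum [intro]:
  "(\<And>x. x \<in> A \<Longrightarrow> affine_poly I (f x)) \<Longrightarrow> affine_poly I (\<lambda>z. \<Sum>x\<in>A. f x z)"
  by (induction A rule: infinite_finite_induct) auto

lemma affine_vec_poly_const [intro]: "affine_vec_poly I (\<lambda>z. c)"
  unfolding affine_vec_poly_def by auto

lemma affine_vec_poly_add [intro]: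
  "affine_vec_poly I F \<Longrightarrow> affine_vec_poly I G \<Longrightarrow> affine_vec_poly I (\<lambda>z. F z + G z)"
  unfolding affine_vec_poly_def by auto

lemma affine_vec_poly_diff [intro]:
  "affine_vec_poly I F \<Longrightarrow> affine_vec_poly I G \<Longrightarrow> affine_vec_poly I (\<lambda>z. F z - G z)"
  unfolding affine_vec_poly_def by auto

lemma affine_vec_poly_scaleR [intro]: "affine_vec_poly I F \<Longrightarrow> affine_vec_poly I (\<lambda>z. c *\<^sub>R F z)"
  unfolding affine_vec_poly_def by auto

lemma affine_vec_poly_sum [intro]:
  "(\<And>x. x \<in> A \<Longrightarrow> affine_vec_poly I (F x)) \<Longrightarrow> affine_vec_poly I (\<lambda>z. \<Sum>x\<in>A. F x z)"
  unfolding affine_vec_poly_def by (simp add: sum_component) (intro allI affine_poly_sum, auto)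

lemma affine_vec_poly_matrix_vector_mult [intro]:
  "affine_vec_poly I F \<Longrightarrow> affine_vec_poly I (\<lambda>z. (A::real^'n^'m) *v F z)"
  unfolding affine_vec_poly_def matrix_vector_mult_def by simp (intro allI affine_poly_sum, auto)

lemma deg2_poly_affine [intro]:
  assumes "affine_poly I f" shows "deg2_poly I f"
proof -
  obtain a0 a where "\<forall>z. f z = a0 + (\<Sum>j\<in>I. a j * z j)"
    using assms unfolding affine_poly_def by blast
  then show ?thesis
    unfolding deg2_poly_def by (intro exI[of _ a0] exI[of _ a] exI[of _ "\<lambda>j k. 0"]) simp
qed

lemma deg2_poly_add [intro]:
  assumes "deg2_poly I f" and "deg2_poly I g" shows "deg2_poly I (\<lambda>z. f z + g z)"
proof -
  obtain a0 a b b0 c d where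
    "\<forall>z. f z = a0 + (\<Sum>j\<in>I. a j * z j) + (\<Sum>j\<in>I. \<Sum>k\<in>I. b j k * z j * z k)" and
    "\<forall>z. g z = b0 + (\<Sum>j\<in>I. c j * z j) + (\<Sum>j\<in>I. \<Sum>k\<in>I. d j k * z j * z k)"
    using assms unfolding deg2_poly_def by blast
  then show ?thesis
    unfolding deg2_poly_def
    by (intro exI[of _ "a0 + b0"] exI[of _ "\<lambda>j. a j + c j"] exI[of _ "\<lambda>j k. b j k + d j k"])
      (simp add: distrib_right sum.distrib)
qed

lemma deg2_poly_cmult [intro]:
  assumes "deg2_poly I f" shows "deg2_poly I (\<lambda>z. c * f z)"
proof -
  obtain a0 a b where "\<forall>z. f z = a0 + (\<Sum>j\<in>I. a j * z j) + (\<Sum>j\<in>I. \<Sum>k\<in>I. b j k * z j * z k)"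
    using assms unfolding deg2_poly_def by blast
  then show ?thesis
    unfolding deg2_poly_def
    by (intro exI[of _ "c * a0"] exI[of _ "\<lambda>j. c * a j"] exI[of _ "\<lambda>j k. c * b j k"])
      (simp add: distrib_left sum_distrib_left mult.assoc)
qed

lemma deg2_poly_diff [intro]: "deg2_poly I f \<Longrightarrow> deg2_poly I g \<Longrightarrow> deg2_poly I (\<lambda>z. f z - g z)"
  using deg2_poly_add[of I f "\<lambda>z. -1 * g z"] deg2_poly_cmult[of I g "-1"] by simp

lemma deg2_poly_sum [intro]:
  "(\<And>x. x \<in> A \<Longrightarrow> deg2_poly I (f x)) \<Longrightarrow> deg2_poly I (\<lambda>z. \<Sum>x\<in>A. f x z)"
  by (induction A rule: infinite_finite_induct) (auto intro: deg2_poly_affine)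

lemma deg2_poly_mult [intro]:
  assumes "affine_poly I f" and "affine_poly I g" shows "deg2_poly I (\<lambda>z. f z * g z)"
proof -
  obtain a0 a b0 b where f: "\<forall>z. f z = a0 + (\<Sum>j\<in>I. a j * z j)" and g: "\<forall>z. g z = b0 + (\<Sum>j\<in>I. b j * z j)"
    using assms unfolding affine_poly_def by blast
  have "f z * g z = a0 * b0 + (\<Sum>j\<in>I. (a0 * b j + b0 * a j) * z j) + (\<Sum>j\<in>I. \<Sum>k\<in>I. a j * b k * z j * z k)"
    for z
  proof -
    have "(\<Sum>j\<in>I. a j * z j) * (\<Sum>k\<in>I. b k * z k) = (\<Sum>j\<in>I. \<Sum>k\<in>I. a j * b k * z j * z k)"
      unfolding sum_product by (intro sum.cong refl) (simp add: ac_simps)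
    moreover have "a0 * (\<Sum>k\<in>I. b k * z k) + b0 * (\<Sum>j\<in>I. a j * z j) = (\<Sum>j\<in>I. (a0 * b j + b0 * a j) * z j)"
      by (simp add: sum_distrib_left sum.distrib[symmetric] algebra_simps)
    ultimately show ?thesis using f g by (simp add: algebra_simps)
  qed
  then show ?thesis
    unfolding deg2_poly_def
    by (intro exI[of _ "a0 * b0"] exI[of _ "\<lambda>j. a0 * b j + b0 * a j"] exI[of _ "\<lambda>j k. a j * b k"]) blast
qed

lemma deg2_poly_norm_sq [intro]:
  "affine_vec_poly I F \<Longrightarrow> deg2_poly I (\<lambda>z. (norm (F z :: real^'n))\<^sup>2)"
  unfolding affine_vec_poly_def
  by (simp add: power2_norm_eq_inner inner_vec_def) (intro deg2_poly_sum deg2_poly_mult, auto)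

lemma deg2_poly_matrix_norm_sq [intro]:
  "(\<And>i j. affine_poly I (\<lambda>z. F z $ i $ j)) \<Longrightarrow> deg2_poly I (\<lambda>z. (norm (F z :: real^'n^'m))\<^sup>2)"
  by (simp add: power2_norm_eq_inner inner_vec_def) (intro deg2_poly_sum deg2_poly_mult, auto)

section \<open>Problem (Q) as a quadratically constrained quadratic program\<close>

definition R_of :: "(qvar \<Rightarrow> real) \<Rightarrow> nat \<Rightarrow> real^3^3" where "R_of z t = (\<chi> i j. z (VR t i j))"
definition s_of :: "(qvar \<Rightarrow> real) \<Rightarrow> nat \<Rightarrow> real^3" where "s_of z t = (\<chi> i. z (VS t i))"
definition v_of :: "(qvar \<Rightarrow> real) \<Rightarrow> nat \<Rightarrow> real^3" where "v_of z t = (\<chi> i. z (VV t i))"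
definition Om_of :: "(qvar \<Rightarrow> real) \<Rightarrow> nat \<Rightarrow> real^3^3" where "Om_of z t = (\<chi> i j. z (VOm t i j))"

lemma of_entries [simp]:
  "R_of (entries R s v Om) = R" "s_of (entries R s v Om) = s"
  "v_of (entries R s v Om) = v" "Om_of (entries R s v Om) = Om"
  by (simp_all add: R_of_def s_of_def v_of_def Om_of_def entries_def vec_eq_iff fun_eq_iff)

lemma qvars_iff [simp]:
  "VR t i j \<in> qvars T \<longleftrightarrow> t \<in> {1..T}" "VS t i \<in> qvars T \<longleftrightarrow> t \<in> {1..T}"
  "VV t i \<in> qvars T \<longleftrightarrow> t \<in> {1..T-1}" "VOm t i j \<in> qvars T \<longleftrightarrow> t \<in> {1..T-1}"
  by (auto simp: qvars_def)

lemma finite_qvars [simp]: "finite (qvars T)"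
proof -
  have "qvars T = (\<lambda>(t,i,j). VR t i j) ` ({1..T} \<times> UNIV) \<union> (\<lambda>(t,i). VS t i) ` ({1..T} \<times> UNIV)
     \<union> (\<lambda>(t,i). VV t i) ` ({1..T-1} \<times> UNIV) \<union> (\<lambda>(t,i,j). VOm t i j) ` ({1..T-1} \<times> UNIV)"
    by (auto simp: qvars_def image_def)
  then show ?thesis by simp
qed

lemma affine_poly_R_of [intro]: "t \<in> {1..T} \<Longrightarrow> affine_poly (qvars T) (\<lambda>z. R_of z t $ i $ j)"
  unfolding R_of_def by (simp add: affine_poly_var)

lemma affine_poly_Om_of [intro]: "t \<in> {1..T-1} \<Longrightarrow> affine_poly (qvars T) (\<lambda>z. Om_of z t $ i $ j)"
  unfolding Om_of_def by (simp add: affine_poly_var)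

lemma affine_vec_poly_s_of [intro]: "t \<in> {1..T} \<Longrightarrow> affine_vec_poly (qvars T) (\<lambda>z. s_of z t)"
  unfolding affine_vec_poly_def s_of_def by (simp add: affine_poly_var)

lemma affine_vec_poly_v_of [intro]: "t \<in> {1..T-1} \<Longrightarrow> affine_vec_poly (qvars T) (\<lambda>z. v_of z t)"
  unfolding affine_vec_poly_def v_of_def by (simp add: affine_poly_var)

lemma affine_vec_poly_transpose_R_of [intro]:
  "t \<in> {1..T} \<Longrightarrow> affine_vec_poly (qvars T) (\<lambda>z. transpose (R_of z t) *v x)"
  unfolding affine_vec_poly_def matrix_vector_mult_def transpose_def
  by (simp add: R_of_def) (intro allI affine_poly_sum affine_poly_multc affine_poly_var, auto)

lemma deg2_poly_objQ:
  "deg2_poly (qvars T) (\<lambda>z. objQ T N B y w om ka lam (R_of z) (s_of z) (v_of z) (Om_of z))"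
proof -
  have cstar: "affine_vec_poly (qvars T) (\<lambda>z. cstar T N B y w lam (R_of z) (s_of z))"
    unfolding cstar_def by (intro affine_vec_poly_add affine_vec_poly_scaleR
        affine_vec_poly_matrix_vector_mult affine_vec_poly_sum affine_vec_poly_diff
        affine_vec_poly_transpose_R_of affine_vec_poly_s_of affine_vec_poly_const)
  have reg: "deg2_poly (qvars T) (\<lambda>z. reg T om ka (v_of z) (Om_of z))"
    unfolding reg_def
  proof (intro deg2_poly_sum deg2_poly_add deg2_poly_cmult deg2_poly_norm_sq deg2_poly_matrix_norm_sq)
    fix t i j assume "t \<in> {1..T-2}"
    then have t: "t \<in> {1..T-1}" "Suc t \<in> {1..T-1}" by auto
    then show "affine_vec_poly (qvars T) (\<lambda>z. v_of z (Suc t) - v_of z t)"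
      by (intro affine_vec_poly_diff affine_vec_poly_v_of)
    show "affine_poly (qvars T) (\<lambda>z. (Om_of z (Suc t) - Om_of z t) $ i $ j)"
      using t by (simp add: affine_poly_diff affine_poly_Om_of)
  qed
  show ?thesis unfolding objQ_def Let_def
    by (intro deg2_poly_add reg deg2_poly_sum deg2_poly_cmult deg2_poly_norm_sq affine_vec_poly_diff
        affine_vec_poly_matrix_vector_mult cstar affine_vec_poly_transpose_R_of affine_vec_poly_s_of
        affine_vec_poly_const) auto
qed

definition cofactor3 :: "real^3^3 \<Rightarrow> real^3^3" where
  "cofactor3 X = vector [cross3 (X$2) (X$3), cross3 (X$3) (X$1), cross3 (X$1) (X$2)]"

lemma cofactor3_mult_transpose: "cofactor3 X ** transpose X = mat (det X)"
  unfolding cofactor3_def cross3_def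
  by (simp add: vec_eq_iff forall_3 sum_3 det_3 matrix_matrix_mult_def transpose_def mat_def algebra_simps)

text \<open>Given orthogonality, det X = 1 is equivalent to the quadratic condition that X equals its
  own cofactor matrix.\<close>
lemma rotation_matrix_iff_cofactor3:
  "rotation_matrix X \<longleftrightarrow> transpose X ** X = mat 1 \<and> cofactor3 X = X"
proof
  assume "rotation_matrix X"
  then have orth: "transpose X ** X = mat 1" and det: "det X = 1"
    by (auto simp: rotation_matrix_def orthogonal_matrix)
  have "cofactor3 X = (cofactor3 X ** transpose X) ** X" by (simp add: matrix_mul_assoc[symmetric] orth)
  then show "transpose X ** X = mat 1 \<and> cofactor3 X = X" by (simp add: cofactor3_mult_transpose det orth)
next
  assume "transpose X ** X = mat 1 \<and> cofactor3 X = X"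
  then have orth: "transpose X ** X = mat 1" and cof: "cofactor3 X = X" by auto
  have "X ** transpose X = mat 1" using orth matrix_left_right_inverse by blast
  then have "mat (det X) = (mat 1 :: real^3^3)" using cofactor3_mult_transpose[of X] cof by simp
  then have "(mat (det X) :: real^3^3) $ 1 $ 1 = (mat 1 :: real^3^3) $ 1 $ 1" by simp
  then have "det X = 1" by (simp add: mat_def)
  then show "rotation_matrix X" using orth by (simp add: rotation_matrix_def orthogonal_matrix)
qed

definition vec_entry_polys :: "('a \<Rightarrow> real^'n::enum) \<Rightarrow> ('a \<Rightarrow> real) list" where
  "vec_entry_polys F = map (\<lambda>k z. F z $ k) Enum.enum"

definition mat_entry_polys :: "('a \<Rightarrow> real^'n::enum^'m::enum) \<Rightarrow> ('a \<Rightarrow> real) list" where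
  "mat_entry_polys F = concat (map (\<lambda>i. vec_entry_polys (\<lambda>z. F z $ i)) Enum.enum)"

lemma vec_entry_polys_eq_0_iff: "(\<forall>q\<in>set (vec_entry_polys F). q z = 0) \<longleftrightarrow> F z = 0"
  by (auto simp: vec_entry_polys_def vec_eq_iff enum_UNIV)

lemma mat_entry_polys_eq_0_iff: "(\<forall>q\<in>set (mat_entry_polys F). q z = 0) \<longleftrightarrow> F z = 0"
  by (auto simp: mat_entry_polys_def vec_entry_polys_eq_0_iff vec_eq_iff enum_UNIV)

lemma deg2_poly_vec_entry_polys:
  "(\<And>k. deg2_poly I (\<lambda>z. F z $ k)) \<Longrightarrow> q \<in> set (vec_entry_polys F) \<Longrightarrow> deg2_poly I q"
  by (auto simp: vec_entry_polys_def)

lemma deg2_poly_mat_entry_polys: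
  "(\<And>i j. deg2_poly I (\<lambda>z. F z $ i $ j)) \<Longrightarrow> q \<in> set (mat_entry_polys F) \<Longrightarrow> deg2_poly I q"
  by (auto simp: mat_entry_polys_def vec_entry_polys_def)

definition rotation_constraints :: "((qvar \<Rightarrow> real) \<Rightarrow> real^3^3) \<Rightarrow> ((qvar \<Rightarrow> real) \<Rightarrow> real) list" where
  "rotation_constraints X =
     mat_entry_polys (\<lambda>z. transpose (X z) ** X z - mat 1) @ mat_entry_polys (\<lambda>z. cofactor3 (X z) - X z)"

definition motion_constraints :: "nat \<Rightarrow> ((qvar \<Rightarrow> real) \<Rightarrow> real) list" where
  "motion_constraints t =
     vec_entry_polys (\<lambda>z. Om_of z t *v s_of z (Suc t) - (s_of z t + v_of z t))
     @ mat_entry_polys (\<lambda>z. R_of z (Suc t) - R_of z t ** Om_of z t)"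

definition feasQ_constraints :: "nat \<Rightarrow> ((qvar \<Rightarrow> real) \<Rightarrow> real) list" where
  "feasQ_constraints T =
     concat (map (\<lambda>t. rotation_constraints (\<lambda>z. R_of z t)) [1..<Suc T])
     @ concat (map (\<lambda>t. rotation_constraints (\<lambda>z. Om_of z t) @ motion_constraints t) [1..<T])"

lemma rotation_constraints_eq_0_iff:
  "(\<forall>q\<in>set (rotation_constraints X). q z = 0) \<longleftrightarrow> rotation_matrix (X z)"
  unfolding rotation_constraints_def set_append ball_Un mat_entry_polys_eq_0_iff
  by (simp add: rotation_matrix_iff_cofactor3)

lemma motion_constraints_eq_0_iff: "(\<forall>q\<in>set (motion_constraints t). q z = 0) \<longleftrightarrow>
   Om_of z t *v s_of z (Suc t) = s_of z t + v_of z t \<and> R_of z (Suc t) = R_of z t ** Om_of z t"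
  unfolding motion_constraints_def set_append ball_Un vec_entry_polys_eq_0_iff mat_entry_polys_eq_0_iff
  by simp

lemma feasQ_iff_constraints:
  "feasQ T R s v Om \<longleftrightarrow> (\<forall>q\<in>set (feasQ_constraints T). q (entries R s v Om) = 0)"
proof -
  have ranges: "set [1..<Suc T] = {1..T}" "set [1..<T] = {1..T-1}" by auto
  have "(\<forall>q\<in>set (feasQ_constraints T). q (entries R s v Om) = 0) \<longleftrightarrow>
     (\<forall>t\<in>{1..T}. \<forall>q\<in>set (rotation_constraints (\<lambda>z. R_of z t)). q (entries R s v Om) = 0) \<and>
     (\<forall>t\<in>{1..T-1}. \<forall>q\<in>set (rotation_constraints (\<lambda>z. Om_of z t)) \<union> set (motion_constraints t).
        q (entries R s v Om) = 0)"
    unfolding feasQ_constraints_def set_append set_concat set_map image_image ball_Un ball_UN ranges ..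
  also have "\<dots> \<longleftrightarrow> feasQ T R s v Om"
    unfolding ball_Un rotation_constraints_eq_0_iff motion_constraints_eq_0_iff of_entries
      feasQ_def SO3_def by blast
  finally show ?thesis ..
qed

lemma deg2_poly_rotation_constraints:
  assumes "\<And>i j. affine_poly I (\<lambda>z. X z $ i $ j)" and "q \<in> set (rotation_constraints X)"
  shows "deg2_poly I q"
proof -
  have X: "deg2_poly I (\<lambda>z. X z $ i $ j)" for i j using assms(1) by blast
  have orth: "deg2_poly I (\<lambda>z. (transpose (X z) ** X z - mat 1) $ i $ j)" for i j
    by (simp add: matrix_matrix_mult_def transpose_def)
      (intro deg2_poly_diff deg2_poly_sum deg2_poly_mult assms(1) deg2_poly_affine affine_poly_const)
  have cof: "deg2_poly I (\<lambda>z. (cofactor3 (X z) - X z) $ i $ j)" for i j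
    using exhaust_3[of i] exhaust_3[of j]
    by (auto simp: cofactor3_def cross3_def intro!: deg2_poly_diff deg2_poly_mult assms(1) X)
  show ?thesis
    using assms(2) deg2_poly_mat_entry_polys[OF orth] deg2_poly_mat_entry_polys[OF cof]
    unfolding rotation_constraints_def by auto
qed

lemma deg2_poly_motion_constraints:
  assumes "t \<in> {1..T-1}" and "q \<in> set (motion_constraints t)"
  shows "deg2_poly (qvars T) q"
proof -
  have t: "t \<in> {1..T}" "Suc t \<in> {1..T}" using assms(1) by auto
  have vec: "deg2_poly (qvars T) (\<lambda>z. (Om_of z t *v s_of z (Suc t) - (s_of z t + v_of z t)) $ k)" for k
    using t assms(1) unfolding matrix_vector_mult_def
    by (simp add: Om_of_def s_of_def v_of_def)
      (intro deg2_poly_diff deg2_poly_add deg2_poly_sum deg2_poly_mult deg2_poly_affine affine_poly_var, auto)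
  have mat: "deg2_poly (qvars T) (\<lambda>z. (R_of z (Suc t) - R_of z t ** Om_of z t) $ i $ j)" for i j
    using t assms(1) unfolding matrix_matrix_mult_def
    by (simp add: R_of_def Om_of_def)
      (intro deg2_poly_diff deg2_poly_sum deg2_poly_mult deg2_poly_affine affine_poly_var, auto)
  show ?thesis
    using assms(2) deg2_poly_vec_entry_polys[OF vec] deg2_poly_mat_entry_polys[OF mat]
    unfolding motion_constraints_def by auto
qed

lemma deg2_poly_feasQ_constraints:
  assumes "q \<in> set (feasQ_constraints T)" shows "deg2_poly (qvars T) q"
proof -
  have ranges: "set [1..<Suc T] = {1..T}" "set [1..<T] = {1..T-1}" by auto
  consider (R) t where "t \<in> {1..T}" "q \<in> set (rotation_constraints (\<lambda>z. R_of z t))"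
    | (Om) t where "t \<in> {1..T-1}" "q \<in> set (rotation_constraints (\<lambda>z. Om_of z t))"
    | (motion) t where "t \<in> {1..T-1}" "q \<in> set (motion_constraints t)"
    using assms unfolding feasQ_constraints_def set_append set_concat set_map image_image ranges by blast
  then show ?thesis
  proof cases
    case (R t)
    then show ?thesis using deg2_poly_rotation_constraints[OF affine_poly_R_of] by blast
  next
    case (Om t)
    then show ?thesis using deg2_poly_rotation_constraints[OF affine_poly_Om_of] by blast
  next
    case (motion t)
    then show ?thesis by (rule deg2_poly_motion_constraints)
  qed
qed

theorem proposition2:
  fixes T N :: nat and B :: "nat \<Rightarrow> real^'k::finite^3" and y :: "nat \<Rightarrow> nat \<Rightarrow> real^3"
    and w :: "nat \<Rightarrow> nat \<Rightarrow> real" and om ka :: "nat \<Rightarrow> real" and lam :: real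
  assumes "T \<ge> 2" and "N \<ge> 1"
    and "\<forall>t\<in>{1..T}. \<forall>i\<in>{1..N}. w t i > 0"
    and "\<forall>t\<in>{1..T-2}. om t \<ge> 0" and "\<forall>t\<in>{1..T-2}. ka t \<ge> 0"
    and "lam > 0"
  shows "valP T N B y w om ka lam = valQ T N B y w om ka lam
    \<and> (\<forall>R p v Om (c::real^'k).
         optP T N B y w om ka lam R p v Om c \<longleftrightarrow>
           (optQ T N B y w om ka lam R (\<lambda>t. transpose (R t) *v p t) v Om
            \<and> c = cstar T N B y w lam R (\<lambda>t. transpose (R t) *v p t)))
    \<and> (\<exists>q. deg2_poly (qvars T) q \<and>
         (\<forall>R s v Om. objQ T N B y w om ka lam R s v Om = q (entries R s v Om)))
    \<and> (\<exists>qs. (\<forall>q\<in>set qs. deg2_poly (qvars T) q) \<and>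
         (\<forall>R s v Om. feasQ T R s v Om \<longleftrightarrow> (\<forall>q\<in>set qs. q (entries R s v Om) = 0)))"
proof -
  interpret pose_problem T N B w lam y om ka
    using assms(3-6) by unfold_locales (auto intro: less_imp_le)
  have "\<exists>q. deg2_poly (qvars T) q \<and>
      (\<forall>R s v Om. objQ T N B y w om ka lam R s v Om = q (entries R s v Om))"
    using deg2_poly_objQ
    by (intro exI[of _ "\<lambda>z. objQ T N B y w om ka lam (R_of z) (s_of z) (v_of z) (Om_of z)"]) simp
  moreover have "\<exists>qs. (\<forall>q\<in>set qs. deg2_poly (qvars T) q) \<and>
      (\<forall>R s v Om. feasQ T R s v Om \<longleftrightarrow> (\<forall>q\<in>set qs. q (entries R s v Om) = 0))"
    using deg2_poly_feasQ_constraints feasQ_iff_constraints by blast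
  ultimately show ?thesis using valP_eq_valQ optP_iff_optQ by blast
qed

end
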